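(* Define the sequence $(y_k)_{k\ge1}$ by $y_1=1$ and $y_{k+1}=y_k+y_k^{1/3}$ for $k\ge1$. For any fixed real number $\alpha>\frac23$, we have $\sum_{k=1}^\infty y_k^{-\alpha}\ll 1$, i.e. the series converges and is bounded by a constant depending only on $\alpha$. *)

theory Defs
  imports Complex_Main
begin

text \<open>The sequence y_1 = 1, y_(k+1) = y_k + y_k^(1/3). We index from 0:
  yseq k corresponds to y_(k+1).\<close>
fun yseq :: "nat \<Rightarrow> real" where
  "yseq 0 = 1"
| "yseq (Suc k) = yseq k + yseq k powr (1/3)"

end

theory Submission
  imports Defs "HOL-Analysis.Summation_Tests"
begin

(* Put t = y_k^(1/3). Then y_(k+1) = t^3 + t, so (y_(k+1)^(2/3))^3 = t^2 (t^2 + 1)^2, which is at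
   least (t^2 + 1/3)^3 once t^2 >= 1/3. Hence y_k^(2/3) grows by at least 1/3 per step, so
   y_k^(-\<alpha>) = (y_k^(2/3))^(-3\<alpha>/2) <= (k/3)^(-3\<alpha>/2), and the p-series with exponent
   3\<alpha>/2 > 1 dominates. *)

lemma yseq_pos: "0 < yseq k"
  by (induction k) (simp_all add: add_pos_nonneg)

lemma square_plus_third_cubed_le:
  fixes t :: real
  assumes "1/3 \<le> t\<^sup>2"
  shows "(t\<^sup>2 + 1/3) ^ 3 \<le> (t ^ 3 + t)\<^sup>2"
proof -
  have "(t ^ 3 + t)\<^sup>2 - (t\<^sup>2 + 1/3) ^ 3 = (t\<^sup>2)\<^sup>2 + 2/3 * t\<^sup>2 - 1/27"
    by (simp add: power2_eq_square power3_eq_cube field_simps)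
  moreover have "0 \<le> (t\<^sup>2)\<^sup>2" by simp
  ultimately show ?thesis using assms by linarith
qed

lemma powr_third_cube:
  fixes x :: real
  assumes "0 \<le> x"
  shows "(x powr (1/3)) ^ 3 = x"
  using assms by (cases "x = 0") (simp_all add: powr_powr flip: powr_numeral)

lemma powr_two_thirds_cube:
  fixes x :: real
  assumes "0 \<le> x"
  shows "(x powr (2/3)) ^ 3 = x\<^sup>2"
  using assms by (cases "x = 0") (simp_all add: powr_powr flip: powr_numeral)

lemma powr_two_thirds_eq_square:
  fixes x :: real
  assumes "0 \<le> x"
  shows "x powr (2/3) = (x powr (1/3))\<^sup>2"
  using assms by (cases "x = 0") (simp_all add: powr_powr flip: powr_numeral)

lemma powr_two_thirds_step:
  fixes y :: real
  assumes "0 \<le> y" and "1/3 \<le> y powr (2/3)"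
  shows "y powr (2/3) + 1/3 \<le> (y + y powr (1/3)) powr (2/3)"
proof -
  define t where "t = y powr (1/3)"
  have cube: "t ^ 3 = y" and square: "y powr (2/3) = t\<^sup>2"
    using assms(1) by (simp_all add: t_def powr_third_cube powr_two_thirds_eq_square)
  have "(y powr (2/3) + 1/3) ^ 3 \<le> (t ^ 3 + t)\<^sup>2"
    using square_plus_third_cubed_le assms(2) by (simp add: square)
  also have "\<dots> = ((y + y powr (1/3)) powr (2/3)) ^ 3"
    using assms(1) powr_two_thirds_cube [of "y + t"] by (simp add: t_def powr_third_cube)
  finally show ?thesis
    by (simp add: power_mono_iff)
qed

lemma yseq_powr_two_thirds_ge: "real (Suc k) / 3 \<le> yseq k powr (2/3)"
proof (induction k)
  case (Suc k)
  have "1/3 \<le> yseq k powr (2/3)"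
    using Suc.IH by (simp add: divide_le_cancel)
  then have "yseq k powr (2/3) + 1/3 \<le> yseq (Suc k) powr (2/3)"
    using powr_two_thirds_step yseq_pos by (simp add: less_imp_le)
  with Suc.IH show ?case by (simp add: add_divide_distrib)
qed simp

lemma yseq_powr_neg_le:
  assumes "0 \<le> \<alpha>"
  shows "yseq k powr (-\<alpha>) \<le> 3 powr (3/2 * \<alpha>) * real (Suc k) powr (-(3/2 * \<alpha>))"
proof -
  have "yseq k powr (-\<alpha>) = (yseq k powr (2/3)) powr (-(3/2 * \<alpha>))"
    by (simp add: powr_powr)
  also have "\<dots> \<le> (real (Suc k) / 3) powr (-(3/2 * \<alpha>))"
    using assms yseq_powr_two_thirds_ge by (intro powr_mono2') auto
  also have "\<dots> = 3 powr (3/2 * \<alpha>) * real (Suc k) powr (-(3/2 * \<alpha>))"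
    by (simp add: powr_divide powr_minus divide_simps)
  finally show ?thesis .
qed

theorem lemma3p1:
  fixes \<alpha> :: real
  assumes "\<alpha> > 2/3"
  shows "summable (\<lambda>k. yseq k powr (-\<alpha>))"
proof (rule summable_comparison_test')
  have "summable (\<lambda>k. real (Suc k) powr (-(3/2 * \<alpha>)))"
    using assms by (subst summable_Suc_iff) (simp add: summable_real_powr_iff)
  then show "summable (\<lambda>k. 3 powr (3/2 * \<alpha>) * real (Suc k) powr (-(3/2 * \<alpha>)))"
    by (rule summable_mult)
  show "norm (yseq k powr (-\<alpha>)) \<le> 3 powr (3/2 * \<alpha>) * real (Suc k) powr (-(3/2 * \<alpha>))"
    for k :: nat
    using yseq_powr_neg_le assms by simp
qed

end
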